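(* Let $(X,\overline p)$ be a perverse space and let $x\in X$ be an isolated singular point, i.e. $\{x\}$ is a singular stratum of $X$. Set $\ell=D\overline p(\{x\})+1$, and let $X\setminus\{x\}$ carry the induced filtration and perversity. Then the $\ell$-skeleta of $\mathscr G_{\overline p}X$ and $\mathscr G_{\overline p}(X\setminus\{x\})$ are isomorphic.
   Context: Filtered spaces. A filtered space of formal dimension $n$ is a nonempty space $X$ with closed subsets $\emptyset=X_{-1}\subseteq\cdots\subseteq X_{n-1}\subsetneq X_n=X$. Strata are the nonempty connected components of $X_i\setminus X_{i-1}$, with codimension $n-i$. Strata in $X\setminus X_{n-1}$ are regular. An open subset $U$ has the induced filtration $U\cap X_i$ and the induced perversity, namely the value of $\overline p$ on the stratum of $X$ containing a given stratum of $U$. Perversities. A perversity is a map $\overline p$ from strata to $\mathbb Z\cup\{\pm\infty\}$ vanishing on regular strata. The top perversity is $\overline t(S)=\operatorname{codim}S-2$, and $D\overline p=\overline t-\overline p$. Full simplices and the Gajer space. A simplex $\sigma\colon\Delta^j\to X$ is $\overline p$-allowable if $\dim\sigma^{-1}S\le j-\operatorname{codim}S+\overline p(S)$ for every singular stratum $S$. Here $\dim$ is polyhedral dimension, with $\dim\emptyset=-\infty$. A simplex is $\overline p$-full if it and all its iterated faces are allowable. $\mathscr G_{\overline p}X\subseteq\mathrm{Sing}\,X$ is the simplicial set of $\overline p$-full simplices. *)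

theory Defs
  imports "HOL-Analysis.Analysis" "HOL-Homology.Homology" "HOL-Library.Extended"
begin

text \<open>A filtration of formal dimension n is given by F 0, ..., F n (values of F
  above n are irrelevant); X_{-1} is the empty set, encoded by prevF.\<close>

definition prevF :: "(nat \<Rightarrow> 'a set) \<Rightarrow> nat \<Rightarrow> 'a set" where
  "prevF F i = (if i = 0 then {} else F (i - 1))"

definition filtered_space :: "'a topology \<Rightarrow> nat \<Rightarrow> (nat \<Rightarrow> 'a set) \<Rightarrow> bool" where
  "filtered_space X n F \<longleftrightarrow>
     topspace X \<noteq> {} \<and> (\<forall>i\<le>n. closedin X (F i)) \<and> (\<forall>i<n. F i \<subseteq> F (Suc i))
     \<and> prevF F n \<subset> F n \<and> F n = topspace X"

definition stratum :: "'a topology \<Rightarrow> nat \<Rightarrow> (nat \<Rightarrow> 'a set) \<Rightarrow> 'a set \<Rightarrow> bool" where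
  "stratum X n F S \<longleftrightarrow>
     (\<exists>i\<le>n. S \<in> connected_components_of (subtopology X (F i - prevF F i)))"

definition stratum_level :: "nat \<Rightarrow> (nat \<Rightarrow> 'a set) \<Rightarrow> 'a set \<Rightarrow> nat" where
  "stratum_level n F S = (THE i. i \<le> n \<and> S \<subseteq> F i - prevF F i)"

definition codim :: "nat \<Rightarrow> (nat \<Rightarrow> 'a set) \<Rightarrow> 'a set \<Rightarrow> nat" where
  "codim n F S = n - stratum_level n F S"

definition singular_stratum :: "'a topology \<Rightarrow> nat \<Rightarrow> (nat \<Rightarrow> 'a set) \<Rightarrow> 'a set \<Rightarrow> bool" where
  "singular_stratum X n F S \<longleftrightarrow> stratum X n F S \<and> stratum_level n F S < n"

definition perversity ::
  "'a topology \<Rightarrow> nat \<Rightarrow> (nat \<Rightarrow> 'a set) \<Rightarrow> ('a set \<Rightarrow> int extended) \<Rightarrow> bool" where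
  "perversity X n F p \<longleftrightarrow>
     (\<forall>S. stratum X n F S \<and> stratum_level n F S = n \<longrightarrow> p S = Fin 0)"

text \<open>D p = t - p, with t(S) = codim S - 2.\<close>
definition dual_perv ::
  "nat \<Rightarrow> (nat \<Rightarrow> 'a set) \<Rightarrow> ('a set \<Rightarrow> int extended) \<Rightarrow> 'a set \<Rightarrow> int extended" where
  "dual_perv n F p S = (case p S of
       Fin q \<Rightarrow> Fin (int (codim n F S) - 2 - q)
     | Pinf \<Rightarrow> Minf
     | Minf \<Rightarrow> Pinf)"

definition induced_perv ::
  "'a topology \<Rightarrow> nat \<Rightarrow> (nat \<Rightarrow> 'a set) \<Rightarrow> ('a set \<Rightarrow> int extended) \<Rightarrow> 'a set
     \<Rightarrow> 'a set \<Rightarrow> int extended" where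
  "induced_perv X n F p U T = p (THE S. stratum X n F S \<and> T \<subseteq> S)"

definition chull :: "(nat \<Rightarrow> real) set \<Rightarrow> (nat \<Rightarrow> real) set" where
  "chull P = {x. \<exists>u. (\<forall>v\<in>P. 0 \<le> u v) \<and> sum u P = 1 \<and> x = (\<lambda>i. \<Sum>v\<in>P. u v * v i)}"

text \<open>pdim_le A k: A is contained in a polyhedron (finite union of geometric
  simplices) of dimension at most k.  For k < 0 this forces A to be empty,
  matching the convention that the empty set has dimension -infinity.\<close>
definition pdim_le :: "(nat \<Rightarrow> real) set \<Rightarrow> int extended \<Rightarrow> bool" where
  "pdim_le A e = (case e of
       Pinf \<Rightarrow> True
     | Minf \<Rightarrow> A = {}
     | Fin k \<Rightarrow> (\<exists>V. finite V \<and> (\<forall>P\<in>V. finite P \<and> int (card P) \<le> k + 1)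
                      \<and> A \<subseteq> (\<Union>P\<in>V. chull P)))"

definition allowable ::
  "'a topology \<Rightarrow> nat \<Rightarrow> (nat \<Rightarrow> 'a set) \<Rightarrow> ('a set \<Rightarrow> int extended) \<Rightarrow> nat
     \<Rightarrow> ((nat \<Rightarrow> real) \<Rightarrow> 'a) \<Rightarrow> bool" where
  "allowable X n F p j \<sigma> \<longleftrightarrow>
     (\<forall>S. singular_stratum X n F S \<longrightarrow>
        pdim_le {t \<in> standard_simplex j. \<sigma> t \<in> S}
                (Fin (int j - int (codim n F S)) + p S))"

inductive iter_face :: "nat \<Rightarrow> ((nat \<Rightarrow> real) \<Rightarrow> 'a) \<Rightarrow> nat \<Rightarrow> ((nat \<Rightarrow> real) \<Rightarrow> 'a) \<Rightarrow> bool"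
  for j \<sigma> where
  self: "iter_face j \<sigma> j \<sigma>"
| face: "iter_face j \<sigma> (Suc k) \<tau> \<Longrightarrow> i \<le> Suc k \<Longrightarrow> iter_face j \<sigma> k (singular_face (Suc k) i \<tau>)"

definition full ::
  "'a topology \<Rightarrow> nat \<Rightarrow> (nat \<Rightarrow> 'a set) \<Rightarrow> ('a set \<Rightarrow> int extended) \<Rightarrow> nat
     \<Rightarrow> ((nat \<Rightarrow> real) \<Rightarrow> 'a) \<Rightarrow> bool" where
  "full X n F p j \<sigma> \<longleftrightarrow> (\<forall>k \<tau>. iter_face j \<sigma> k \<tau> \<longrightarrow> allowable X n F p k \<tau>)"

text \<open>A simplicial subset of Sing X is represented by its family of sets of
  j-simplices; the simplicial structure is the one of Sing X.\<close>
definition gajer ::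
  "'a topology \<Rightarrow> nat \<Rightarrow> (nat \<Rightarrow> 'a set) \<Rightarrow> ('a set \<Rightarrow> int extended)
     \<Rightarrow> nat \<Rightarrow> ((nat \<Rightarrow> real) \<Rightarrow> 'a) set" where
  "gajer X n F p j = {\<sigma>. singular_simplex j X \<sigma> \<and> full X n F p j \<sigma>}"

text \<open>For a monotone map theta from [m] to [k], the operator theta^* sends a
  k-simplex sigma to sigma composed with the affine map Delta^m to Delta^k
  sending vertex e_i to e_(theta i).\<close>
definition simp_op :: "nat \<Rightarrow> (nat \<Rightarrow> nat) \<Rightarrow> ((nat \<Rightarrow> real) \<Rightarrow> 'a) \<Rightarrow> (nat \<Rightarrow> real) \<Rightarrow> 'a" where
  "simp_op m \<theta> \<sigma> =
     simplex_map m \<sigma> (oriented_simplex m (\<lambda>i l. if l = \<theta> i then 1 else 0))"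

definition simp_map :: "nat \<Rightarrow> nat \<Rightarrow> (nat \<Rightarrow> nat) \<Rightarrow> bool" where
  "simp_map m k \<theta> \<longleftrightarrow> mono_on {..m} \<theta> \<and> \<theta> ` {..m} \<subseteq> {..k}"

definition skeleton :: "int extended \<Rightarrow> (nat \<Rightarrow> ((nat \<Rightarrow> real) \<Rightarrow> 'a) set)
     \<Rightarrow> nat \<Rightarrow> ((nat \<Rightarrow> real) \<Rightarrow> 'a) set" where
  "skeleton l K m =
     {simp_op m \<theta> \<tau> | \<theta> \<tau> k. Fin (int k) \<le> l \<and> \<tau> \<in> K k \<and> simp_map m k \<theta>}"

definition simp_iso :: "(nat \<Rightarrow> ((nat \<Rightarrow> real) \<Rightarrow> 'a) set) \<Rightarrow> (nat \<Rightarrow> ((nat \<Rightarrow> real) \<Rightarrow> 'b) set) \<Rightarrow> bool" where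
  "simp_iso K L \<longleftrightarrow>
     (\<exists>\<phi>. (\<forall>m. bij_betw (\<phi> m) (K m) (L m)) \<and>
          (\<forall>m k \<theta> \<sigma>. simp_map m k \<theta> \<and> \<sigma> \<in> K k \<longrightarrow>
               \<phi> m (simp_op m \<theta> \<sigma>) = simp_op m \<theta> (\<phi> k \<sigma>)))"

end

theory Submission
  imports Defs
begin

text \<open>A \<open>k\<close>-simplex that is allowable at the point stratum \<open>{x}\<close> satisfies
  \<open>dim \<sigma>\<^sup>-\<^sup>1(x) \<le> k - codim {x} + p{x} = k - 2 - Dp{x}\<close>, which is negative as soon as
  \<open>k \<le> Dp{x} + 1\<close>; hence full simplices of dimension at most \<open>\<ell>\<close> miss \<open>x\<close> altogether.
  Away from \<open>x\<close>, the strata, codimensions and induced perversity of \<open>X - {x}\<close> are those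
  of \<open>X\<close>, so both Gajer spaces have the same simplices in dimensions \<open>\<le> \<ell>\<close>, and their
  \<open>\<ell>\<close>-skeleta coincide.\<close>

lemma filtration_mono:
  assumes "filtered_space X n F" "i \<le> k" "k \<le> n"
  shows "F i \<subseteq> F k"
proof (rule lift_Suc_mono_le_ivl[of "{..<n}"])
  show "F m \<subseteq> F (Suc m)" if "m \<in> {..<n}" for m
    using assms(1) that unfolding filtered_space_def by blast
  show "{i..<k} \<subseteq> {..<n}" using assms(3) by auto
qed (fact assms(2))

lemma filtration_level_unique:
  assumes "filtered_space X n F" "i \<le> n" "j \<le> n"
    and "a \<in> F i - prevF F i" "a \<in> F j - prevF F j"
  shows "i = j"
proof -
  have separated: "a \<notin> F i' - prevF F i' \<or> a \<notin> F j' - prevF F j'"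
    if "i' < j'" "j' \<le> n" for i' j'
  proof -
    have "i' \<le> j' - 1" "j' - 1 \<le> n" using that by auto
    then have "F i' \<subseteq> prevF F j'" using filtration_mono[OF assms(1)] that unfolding prevF_def by simp
    then show ?thesis by blast
  qed
  show ?thesis
    using separated[of i j] separated[of j i] assms(2-5) by (cases i j rule: linorder_cases) auto
qed

lemma stratum_subset_topspace: "stratum X n F S \<Longrightarrow> S \<subseteq> topspace X"
  unfolding stratum_def using connected_components_of_subset by fastforce

lemma stratum_eq_if_subset:
  assumes "filtered_space X n F" "stratum X n F S" "stratum X n F T" "T \<subseteq> S"
  shows "S = T"
proof -
  obtain i where i: "i \<le> n" "S \<in> connected_components_of (subtopology X (F i - prevF F i))"
    using assms(2) unfolding stratum_def by blast
  obtain j where j: "j \<le> n" "T \<in> connected_components_of (subtopology X (F j - prevF F j))"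
    using assms(3) unfolding stratum_def by blast
  obtain a where "a \<in> T" using nonempty_connected_components_of[OF j(2)] by blast
  moreover have "S \<subseteq> F i - prevF F i" "T \<subseteq> F j - prevF F j"
    using connected_components_of_subset[OF i(2)] connected_components_of_subset[OF j(2)] by auto
  ultimately have "i = j" using filtration_level_unique[OF assms(1) i(1) j(1)] assms(4) by blast
  then have Sj: "S \<in> connected_components_of (subtopology X (F j - prevF F j))" using i(2) by simp
  show ?thesis
    using connected_components_of_overlap[OF Sj j(2)] \<open>a \<in> T\<close> assms(4) by blast
qed

lemma induced_perv_stratum:
  assumes "filtered_space X n F" "stratum X n F T"
  shows "induced_perv X n F p U T = p T"
proof -
  have "(THE S. stratum X n F S \<and> T \<subseteq> S) = T"
    using stratum_eq_if_subset[OF assms(1) _ assms(2)] assms(2) by (intro the_equality) auto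
  then show ?thesis unfolding induced_perv_def by simp
qed

lemma pdim_le_empty: "pdim_le {} e"
  unfolding pdim_le_def by (cases e) (auto intro: exI[of _ "{}"])

lemma pdim_le_negative_empty:
  assumes "pdim_le A (Fin m)" "m < 0"
  shows "A = {}"
proof -
  obtain V where V: "\<forall>P\<in>V. finite P \<and> int (card P) \<le> m + 1" "A \<subseteq> (\<Union>P\<in>V. chull P)"
    using assms(1) unfolding pdim_le_def by auto
  have "P = {}" if "P \<in> V" for P
  proof -
    have "finite P" "int (card P) \<le> m + 1" using V(1) that by auto
    then have "card P = 0" using assms(2) by linarith
    then show ?thesis using \<open>finite P\<close> by simp
  qed
  moreover have "chull {} = {}" unfolding chull_def by simp
  ultimately show ?thesis using V(2) by auto
qed

lemma allowable_misses_stratum: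
  assumes "singular_stratum X n F S" "allowable X n F p k \<sigma>"
    and "Fin (int k) \<le> dual_perv n F p S + 1"
  shows "{t \<in> standard_simplex k. \<sigma> t \<in> S} = {}"
proof -
  have pd: "pdim_le {t \<in> standard_simplex k. \<sigma> t \<in> S} (Fin (int k - int (codim n F S)) + p S)"
    using assms(1,2) unfolding allowable_def by blast
  show ?thesis
  proof (cases "p S")
    case (Fin q)
    have "pdim_le {t \<in> standard_simplex k. \<sigma> t \<in> S} (Fin (int k - int (codim n F S) + q))"
      using pd Fin by simp
    moreover have "int k - int (codim n F S) + q < 0"
      using assms(3) Fin unfolding dual_perv_def by (simp add: one_extended_def)
    ultimately show ?thesis by (rule pdim_le_negative_empty)
  next
    case Pinf
    then show ?thesis using assms(3) unfolding dual_perv_def by (simp add: one_extended_def)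
  next
    case Minf
    then show ?thesis using pd by (simp add: pdim_le_def)
  qed
qed

lemma iter_face_singular_simplex:
  assumes "iter_face j \<sigma> k \<tau>" "singular_simplex j Y \<sigma>"
  shows "singular_simplex k Y \<tau>"
  using assms
proof (induction rule: iter_face.induct)
  case (face k \<tau> i)
  then show ?case using singular_simplex_singular_face[of "Suc k" Y \<tau> i] by simp
qed simp

lemma connected_components_of_subtopology_Diff_singleton:
  assumes "x \<in> A \<Longrightarrow> {x} \<in> connected_components_of (subtopology X A)"
  shows "T \<in> connected_components_of (subtopology X (A - {x})) \<longleftrightarrow>
         T \<in> connected_components_of (subtopology X A) \<and> x \<notin> T"
    (is "?T \<longleftrightarrow> _")
proof -
  have keep: "C \<in> connected_components_of (subtopology X (A - {x}))"
    if "C \<in> connected_components_of (subtopology X A)" "x \<notin> C" for C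
  proof -
    have "C \<subseteq> A - {x}" using connected_components_of_subset[OF that(1)] that(2) by auto
    from connected_components_of_subtopology[OF that(1) this] show ?thesis
      by (simp add: subtopology_subtopology Int_absorb1)
  qed
  have "T \<in> connected_components_of (subtopology X A) \<and> x \<notin> T" if ?T
  proof -
    obtain a where a: "a \<in> T" using nonempty_connected_components_of[OF \<open>?T\<close>] by blast
    have T: "T \<subseteq> A - {x}" "T \<subseteq> topspace X"
      using connected_components_of_subset[OF \<open>?T\<close>] by auto
    define C where "C = connected_component_of_set (subtopology X A) a"
    have C: "C \<in> connected_components_of (subtopology X A)"
      unfolding C_def connected_component_in_connected_components_of using a T by auto
    have "connectedin (subtopology X A) T"
      using connectedin_connected_components_of[OF \<open>?T\<close>] by (auto simp: connectedin_subtopology)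
    then have "T \<subseteq> C" unfolding C_def using a by (rule connected_component_of_maximal)
    have "x \<notin> C"
    proof
      assume "x \<in> C"
      moreover have "x \<in> A" using \<open>x \<in> C\<close> connected_components_of_subset[OF C] by auto
      ultimately have "{x} = C" using connected_components_of_overlap[OF assms C] by blast
      then show False using \<open>T \<subseteq> C\<close> a T by auto
    qed
    then have "C \<in> connected_components_of (subtopology X (A - {x}))" using keep C by blast
    then have "C = T" using connected_components_of_overlap[OF _ \<open>?T\<close>] a \<open>T \<subseteq> C\<close> by blast
    then show ?thesis using C \<open>x \<notin> C\<close> by auto
  qed
  then show ?thesis using keep[of T] by blast
qed

definition allowable_wrt ::
  "nat \<Rightarrow> (nat \<Rightarrow> 'a set) \<Rightarrow> ('a set \<Rightarrow> int extended) \<Rightarrow> nat \<Rightarrow> ((nat \<Rightarrow> real) \<Rightarrow> 'a)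
     \<Rightarrow> 'a set \<Rightarrow> bool" where
  "allowable_wrt n F p j \<sigma> S \<longleftrightarrow>
     pdim_le {t \<in> standard_simplex j. \<sigma> t \<in> S} (Fin (int j - int (codim n F S)) + p S)"

lemma allowable_iff_allowable_wrt:
  "allowable X n F p j \<sigma> \<longleftrightarrow> (\<forall>S. singular_stratum X n F S \<longrightarrow> allowable_wrt n F p j \<sigma> S)"
  unfolding allowable_def allowable_wrt_def ..

locale isolated_singular_point =
  fixes X :: "'a topology" and n :: nat and F :: "nat \<Rightarrow> 'a set" and x :: 'a
  assumes filtered: "filtered_space X n F"
    and point_stratum: "singular_stratum X n F {x}"
begin

abbreviation "X' \<equiv> subtopology X (topspace X - {x})"
abbreviation "F' \<equiv> \<lambda>i. F i \<inter> (topspace X - {x})"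
abbreviation "punctured_perv p \<equiv> induced_perv X n F p (topspace X - {x})"

lemma filtration_subset_topspace: "i \<le> n \<Longrightarrow> F i \<subseteq> topspace X"
  using filtered closedin_subset unfolding filtered_space_def by blast

lemma level_punctured:
  assumes "i \<le> n"
  shows "F' i - prevF F' i = (F i - prevF F i) - {x}"
  using filtration_subset_topspace[OF assms] unfolding prevF_def by auto

lemma subtopology_level_punctured:
  assumes "i \<le> n"
  shows "subtopology X' (F' i - prevF F' i) = subtopology X ((F i - prevF F i) - {x})"
proof -
  have "(topspace X - {x}) \<inter> ((F i - prevF F i) - {x}) = (F i - prevF F i) - {x}"
    using filtration_subset_topspace[OF assms] by blast
  then show ?thesis unfolding level_punctured[OF assms] subtopology_subtopology by simp
qed

lemma point_component:
  assumes "i \<le> n" "x \<in> F i - prevF F i"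
  shows "{x} \<in> connected_components_of (subtopology X (F i - prevF F i))"
proof -
  obtain i0 where i0: "i0 \<le> n" "{x} \<in> connected_components_of (subtopology X (F i0 - prevF F i0))"
    using point_stratum unfolding singular_stratum_def stratum_def by blast
  then have "x \<in> F i0 - prevF F i0" using connected_components_of_subset by fastforce
  then have "i = i0" using filtration_level_unique[OF filtered assms(1) i0(1) assms(2)] by blast
  then show ?thesis using i0(2) by simp
qed

lemma stratum_punctured_iff: "stratum X' n F' T \<longleftrightarrow> stratum X n F T \<and> x \<notin> T"
proof -
  have "T \<in> connected_components_of (subtopology X' (F' i - prevF F' i)) \<longleftrightarrow>
        T \<in> connected_components_of (subtopology X (F i - prevF F i)) \<and> x \<notin> T"
    if "i \<le> n" for i
    using connected_components_of_subtopology_Diff_singleton[OF point_component[OF that]]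
    unfolding subtopology_level_punctured[OF that] .
  then show ?thesis unfolding stratum_def by blast
qed

lemma stratum_level_punctured:
  assumes "T \<subseteq> topspace X - {x}"
  shows "stratum_level n F' T = stratum_level n F T"
proof -
  have "(i \<le> n \<and> T \<subseteq> F' i - prevF F' i) \<longleftrightarrow> (i \<le> n \<and> T \<subseteq> F i - prevF F i)" for i
    using level_punctured assms by blast
  then show ?thesis unfolding stratum_level_def by simp
qed

lemma singular_stratum_punctured_iff:
  "singular_stratum X' n F' T \<longleftrightarrow> singular_stratum X n F T \<and> x \<notin> T"
proof (cases "stratum X n F T \<and> x \<notin> T")
  case True
  then have "T \<subseteq> topspace X - {x}" using stratum_subset_topspace by blast
  note level_eq = stratum_level_punctured[OF this]
  show ?thesis using True unfolding singular_stratum_def stratum_punctured_iff level_eq by blast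
next
  case False
  then show ?thesis unfolding singular_stratum_def stratum_punctured_iff by blast
qed

lemma allowable_wrt_punctured:
  assumes "stratum X n F S" "x \<notin> S"
  shows "allowable_wrt n F' (punctured_perv p) j \<sigma> S = allowable_wrt n F p j \<sigma> S"
proof -
  have "S \<subseteq> topspace X - {x}" using stratum_subset_topspace[OF assms(1)] assms(2) by blast
  note level_eq = stratum_level_punctured[OF this]
  show ?thesis
    unfolding allowable_wrt_def codim_def level_eq
      induced_perv_stratum[OF filtered assms(1)] ..
qed

lemma allowable_punctured_iff:
  assumes "x \<notin> \<sigma> ` standard_simplex j"
  shows "allowable X' n F' (punctured_perv p) j \<sigma> \<longleftrightarrow> allowable X n F p j \<sigma>"
proof -
  have "allowable_wrt n F p j \<sigma> S" if "singular_stratum X n F S" "x \<in> S" for S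
  proof -
    have "S = {x}"
      using stratum_eq_if_subset[OF filtered] that point_stratum unfolding singular_stratum_def
      by blast
    then have no_preimage: "{t \<in> standard_simplex j. \<sigma> t \<in> S} = {}" using assms by auto
    show ?thesis unfolding allowable_wrt_def no_preimage by (rule pdim_le_empty)
  qed
  then show ?thesis
    unfolding allowable_iff_allowable_wrt singular_stratum_punctured_iff
    using allowable_wrt_punctured unfolding singular_stratum_def by blast
qed

lemma singular_simplex_punctured_iff:
  "singular_simplex j X' \<sigma> \<longleftrightarrow> singular_simplex j X \<sigma> \<and> x \<notin> \<sigma> ` standard_simplex j"
proof -
  have "\<sigma> ` standard_simplex j \<subseteq> topspace X" if "singular_simplex j X \<sigma>"
    using that unfolding singular_simplex_def
    by (auto simp: image_subset_iff dest: continuous_map_image_subset_topspace)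
  then show ?thesis unfolding singular_simplex_subtopology by blast
qed

lemma full_punctured_iff:
  assumes "singular_simplex k X' \<sigma>"
  shows "full X' n F' (punctured_perv p) k \<sigma> \<longleftrightarrow> full X n F p k \<sigma>"
proof -
  have "x \<notin> \<tau> ` standard_simplex j" if "iter_face k \<sigma> j \<tau>" for j \<tau>
    using iter_face_singular_simplex[OF that assms] singular_simplex_punctured_iff by blast
  then show ?thesis unfolding full_def using allowable_punctured_iff by blast
qed

lemma gajer_punctured_low_dim:
  assumes "Fin (int k) \<le> dual_perv n F p {x} + 1"
  shows "gajer X' n F' (punctured_perv p) k = gajer X n F p k"
proof (rule Set.set_eqI)
  fix \<sigma>
  have "x \<notin> \<sigma> ` standard_simplex k" if "full X n F p k \<sigma>"
    using allowable_misses_stratum[OF point_stratum _ assms] that iter_face.self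
    unfolding full_def by blast
  then show "\<sigma> \<in> gajer X' n F' (punctured_perv p) k \<longleftrightarrow> \<sigma> \<in> gajer X n F p k"
    unfolding gajer_def using singular_simplex_punctured_iff full_punctured_iff by blast
qed

end

lemma skeleton_cong:
  assumes "\<And>k. Fin (int k) \<le> l \<Longrightarrow> K k = L k"
  shows "skeleton l K = skeleton l L"
proof -
  have "\<tau> \<in> K k \<longleftrightarrow> \<tau> \<in> L k" if "Fin (int k) \<le> l" for \<tau> k
    using assms[OF that] by simp
  then show ?thesis unfolding skeleton_def by (intro ext Collect_cong) blast
qed

lemma simp_iso_refl: "simp_iso K K"
  unfolding simp_iso_def by (rule exI[of _ "\<lambda>m. id"]) simp

theorem mainTheorem12:
  fixes X :: "'a topology" and n :: nat and F :: "nat \<Rightarrow> 'a set"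
    and p :: "'a set \<Rightarrow> int extended" and x :: 'a
  assumes "filtered_space X n F"
    and "perversity X n F p"
    and "singular_stratum X n F {x}"
  shows "simp_iso
           (skeleton (dual_perv n F p {x} + 1) (gajer X n F p))
           (skeleton (dual_perv n F p {x} + 1)
              (gajer (subtopology X (topspace X - {x})) n (\<lambda>i. F i \<inter> (topspace X - {x}))
                     (induced_perv X n F p (topspace X - {x}))))"
proof -
  interpret isolated_singular_point X n F x
    using assms(1,3) by unfold_locales
  have "skeleton (dual_perv n F p {x} + 1) (gajer X n F p) =
        skeleton (dual_perv n F p {x} + 1) (gajer X' n F' (punctured_perv p))"
    by (rule skeleton_cong) (rule gajer_punctured_low_dim[symmetric])
  then show ?thesis by (metis simp_iso_refl)
qed

end
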